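(* Let $A\subseteq\mathbb{N}$ be a sum-dominant set with $|A|=6$. Then $A-A$ contains at most $8$ distinct positive elements.
   Context: For a finite set $A\subseteq\mathbb{N}$, the sum set is $A+A=\{a_i+a_j : a_i,a_j\in A\}$ and the difference set is $A-A=\{a_i-a_j : a_i,a_j\in A\}$. The set $A$ is called sum-dominant if $|A+A|>|A-A|$. *)

theory Defs
  imports Main
begin

definition sumset :: "nat set \<Rightarrow> nat set" where
  "sumset A = {a + b | a b. a \<in> A \<and> b \<in> A}"

definition diffset :: "nat set \<Rightarrow> int set" where
  "diffset A = {int a - int b | a b. a \<in> A \<and> b \<in> A}"

definition sum_dominant :: "nat set \<Rightarrow> bool" where
  "sum_dominant A \<longleftrightarrow> finite A \<and> card (sumset A) > card (diffset A)"

end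

theory Submission
  imports Defs
begin

text \<open>
  With \<open>|A| = 6\<close> there are 21 pairs \<open>a \<le> b\<close>, so \<open>|A+A| \<le> 21\<close>, while
  \<open>|A-A| = 2k + 1\<close> for \<open>k\<close> positive differences. Sum-dominance with \<open>k \<ge> 9\<close>
  would force \<open>k = 9\<close> and \<open>|A+A| \<ge> 20\<close>, i.e. at most one coincidence \<open>a+b = c+d\<close>.
  But every coincidence \<open>x - y = z - w\<close> (\<open>w < z < x\<close>) among the 15 positive
  differences yields the sum coincidence \<open>w + x = y + z\<close>; a single sum coincidence
  pins down \<open>x\<close>, so at most 5 differences are lost and \<open>k \<ge> 10\<close>.
\<close>

definition sum_pairs :: "nat set \<Rightarrow> (nat \<times> nat) set" where
  "sum_pairs A = {(a, b). a \<in> A \<and> b \<in> A \<and> a \<le> b}"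

definition diff_pairs :: "nat set \<Rightarrow> (nat \<times> nat) set" where
  "diff_pairs A = {(a, b). a \<in> A \<and> b \<in> A \<and> b < a}"

lemma finite_sum_pairs [simp]: "finite A \<Longrightarrow> finite (sum_pairs A)"
  unfolding sum_pairs_def by (rule finite_subset[of _ "A \<times> A"]) auto

lemma finite_diff_pairs [simp]: "finite A \<Longrightarrow> finite (diff_pairs A)"
  unfolding diff_pairs_def by (rule finite_subset[of _ "A \<times> A"]) auto

lemma sumset_eq_image_sum_pairs: "sumset A = (\<lambda>(a, b). a + b) ` sum_pairs A"
  unfolding sumset_def sum_pairs_def image_def
  by auto (metis add.commute nat_le_linear)

lemma pos_diffset_eq_image_diff_pairs:
  "{d \<in> diffset A. d > 0} = (\<lambda>(a, b). int a - int b) ` diff_pairs A"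
  unfolding diffset_def diff_pairs_def image_def by auto

lemma card_sum_pairs:
  assumes "finite A"
  shows "card (sum_pairs A) = card (diff_pairs A) + card A"
proof -
  have "sum_pairs A = (\<lambda>a. (a, a)) ` A \<union> prod.swap ` diff_pairs A"
    unfolding sum_pairs_def diff_pairs_def by force
  moreover have "(\<lambda>a. (a, a)) ` A \<inter> prod.swap ` diff_pairs A = {}"
    unfolding diff_pairs_def by auto
  moreover have "card ((\<lambda>a. (a, a)) ` A) = card A"
    by (simp add: card_image inj_on_def)
  ultimately show ?thesis
    using assms by (simp add: card_Un_disjoint card_image)
qed

lemma card_sum_pairs_add_card_diff_pairs:
  assumes "finite A"
  shows "card (sum_pairs A) + card (diff_pairs A) = card A * card A"
proof -
  have "A \<times> A = sum_pairs A \<union> diff_pairs A"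
    unfolding sum_pairs_def diff_pairs_def by auto
  moreover have "sum_pairs A \<inter> diff_pairs A = {}"
    unfolding sum_pairs_def diff_pairs_def by auto
  ultimately show ?thesis
    using assms by (metis card_Un_disjoint card_cartesian_product finite_sum_pairs finite_diff_pairs)
qed

lemma card_diffset:
  assumes "finite A" "A \<noteq> {}"
  shows "card (diffset A) = 2 * card {d \<in> diffset A. d > 0} + 1"
proof -
  let ?P = "{d \<in> diffset A. d > 0}"
  have symm: "- d \<in> diffset A" if "d \<in> diffset A" for d
    using that unfolding diffset_def by force
  have "0 \<in> diffset A"
    using assms(2) unfolding diffset_def by force
  then have "diffset A = insert 0 (?P \<union> uminus ` ?P)"
    using symm by (auto simp: image_iff) (metis minus_minus neg_less_0_iff_less not_less_iff_gr_or_eq)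
  then have "card (diffset A) = card (insert 0 (?P \<union> uminus ` ?P))"
    by (rule arg_cong)
  also have "\<dots> = 2 * card ?P + 1"
  proof -
    have "finite ?P"
      using assms(1) by (simp add: pos_diffset_eq_image_diff_pairs)
    then have "card (?P \<union> uminus ` ?P) = 2 * card ?P"
      by (subst card_Un_disjoint) (auto simp: card_image)
    with \<open>finite ?P\<close> show ?thesis by (simp add: image_iff)
  qed
  finally show ?thesis .
qed

lemma inj_on_Diff_singleton_if_card_le_Suc_card_image:
  assumes "finite T" "card T \<le> Suc (card (f ` T))"
  shows "\<exists>t. inj_on f (T - {t})"
proof (cases "inj_on f T")
  case True
  then show ?thesis by (meson inj_on_diff)
next
  case False
  then obtain t t' where t: "t \<in> T" "t' \<in> T" "t \<noteq> t'" "f t = f t'"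
    unfolding inj_on_def by blast
  then have "f ` (T - {t}) = f ` T" by blast
  then have "card (T - {t}) \<le> card (f ` (T - {t}))"
    using t assms by simp
  then have "inj_on f (T - {t})"
    using assms(1) card_image_le[of "T - {t}" f] by (simp add: eq_card_imp_inj_on)
  then show ?thesis by blast
qed

lemma collision_unique_if_inj_on_Diff_singleton:
  assumes inj: "inj_on f (T - {t})" and "{p, p', q, q'} \<subseteq> T"
    and "p \<noteq> p'" "f p = f p'" "q \<noteq> q'" "f q = f q'"
  shows "{p, p'} = {q, q'}"
proof -
  have partner: "\<exists>u \<in> T - {t}. {x, x'} = {t, u} \<and> f u = f t"
    if "{x, x'} \<subseteq> T" "x \<noteq> x'" "f x = f x'" for x x'
    using inj_onD[OF inj, of x x'] that by (cases "x = t") (auto simp: insert_commute)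
  obtain u v where "u \<in> T - {t}" "v \<in> T - {t}" "f u = f v"
    "{p, p'} = {t, u}" "{q, q'} = {t, v}"
    using partner[of p p'] partner[of q q'] assms by (metis insert_subset)
  then show ?thesis using inj_onD[OF inj] by metis
qed

lemma card_le_card_image_add_card_non_minimal:
  fixes g :: "'a \<Rightarrow> 'b" and h :: "'a \<Rightarrow> 'c::linorder"
  assumes "finite D" and inj: "inj_on (\<lambda>p. (g p, h p)) D"
  shows "card D \<le> card (g ` D) + card {p \<in> D. \<exists>q \<in> D. g q = g p \<and> h q < h p}"
proof -
  define B where "B = {p \<in> D. \<exists>q \<in> D. g q = g p \<and> h q < h p}"
  have "inj_on g (D - B)"
  proof (rule inj_onI)
    fix p q assume "p \<in> D - B" "q \<in> D - B" "g p = g q"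
    moreover from this have "h p = h q"
      unfolding B_def by (metis (mono_tags, lifting) DiffD1 DiffD2 mem_Collect_eq neqE)
    ultimately show "p = q"
      using inj_onD[OF inj] by auto
  qed
  have "B \<subseteq> D"
    unfolding B_def by blast
  then have "card (D - B) = card D - card B" "card B \<le> card D"
    using assms(1) by (simp_all add: card_Diff_subset card_mono finite_subset)
  then have "card D \<le> card (D - B) + card B"
    by linarith
  also have "card (D - B) = card (g ` (D - B))"
    using \<open>inj_on g (D - B)\<close> by (simp add: card_image)
  also have "\<dots> \<le> card (g ` D)"
    using assms(1) by (intro card_mono) auto
  finally show ?thesis
    unfolding B_def by simp
qed

lemma sum_collision_of_diff_collision:
  assumes "(x, y) \<in> diff_pairs A" "(z, w) \<in> diff_pairs A"
    and "int x - int y = int z - int w" "z < x"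
  shows "(w, x) \<in> sum_pairs A" "(min y z, max y z) \<in> sum_pairs A"
    and "w + x = min y z + max y z" "w < min y z"
  using assms unfolding diff_pairs_def sum_pairs_def by (auto simp: min_def max_def)

lemma diff_collisions_share_minuend_if_inj_on_sums:
  assumes inj: "inj_on (\<lambda>(a, b). a + b) (sum_pairs A - {t})"
    and "(x, y) \<in> diff_pairs A" "(z, w) \<in> diff_pairs A" "int x - int y = int z - int w" "z < x"
    and "(x', y') \<in> diff_pairs A" "(z', w') \<in> diff_pairs A"
      "int x' - int y' = int z' - int w'" "z' < x'"
  shows "x = x'"
proof -
  note P = sum_collision_of_diff_collision[OF assms(2-5)]
  note Q = sum_collision_of_diff_collision[OF assms(6-9)]
  have "{(w, x), (min y z, max y z)} = {(w', x'), (min y' z', max y' z')}"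
    using collision_unique_if_inj_on_Diff_singleton[OF inj,
        of "(w, x)" "(min y z, max y z)" "(w', x')" "(min y' z', max y' z')"] P Q
    by auto
  with P(4) Q(4) show ?thesis
    by (auto simp: doubleton_eq_iff)
qed

lemma card_diff_pairs_le_if_inj_on_sums:
  assumes "finite A" and inj: "inj_on (\<lambda>(a, b). a + b) (sum_pairs A - {t})"
  shows "card (diff_pairs A) \<le> card {d \<in> diffset A. d > 0} + (card A - 1)"
proof -
  let ?D = "diff_pairs A" and ?g = "\<lambda>(a, b). int a - int b :: int"
  define B where "B = {p \<in> ?D. \<exists>q \<in> ?D. ?g q = ?g p \<and> fst q < fst p}"
  have B_cases: "\<exists>z w. (x, y) \<in> ?D \<and> (z, w) \<in> ?D \<and> int x - int y = int z - int w \<and> z < x"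
    if "(x, y) \<in> B" for x y
    using that unfolding B_def by force
  have "inj_on (\<lambda>p. (?g p, fst p)) ?D"
    by (auto simp: inj_on_def)
  from card_le_card_image_add_card_non_minimal[OF finite_diff_pairs[OF assms(1)] this]
  have "card ?D \<le> card {d \<in> diffset A. d > 0} + card B"
    unfolding B_def pos_diffset_eq_image_diff_pairs by simp
  moreover have "card B \<le> card A - 1"
  proof (cases "B = {}")
    case False
    then obtain x0 y0 where "(x0, y0) \<in> B" by auto
    then have "x0 \<in> A"
      using B_cases by (auto simp: diff_pairs_def)
    have "B \<subseteq> {x0} \<times> (A - {x0})"
    proof (rule subsetI, unfold split_paired_all)
      fix x y assume "(x, y) \<in> B"
      then have "x = x0"
        using B_cases[of x y] B_cases[of x0 y0] \<open>(x0, y0) \<in> B\<close>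
          diff_collisions_share_minuend_if_inj_on_sums[OF inj] by blast
      with B_cases[OF \<open>(x, y) \<in> B\<close>] show "(x, y) \<in> {x0} \<times> (A - {x0})"
        by (auto simp: diff_pairs_def)
    qed
    then show ?thesis
      using assms(1) \<open>x0 \<in> A\<close> card_mono[of "{x0} \<times> (A - {x0})" B]
      by (simp add: card_cartesian_product)
  qed simp
  ultimately show ?thesis
    by linarith
qed

theorem lemma5:
  fixes A :: "nat set"
  assumes "sum_dominant A" and "card A = 6"
  shows "card {d \<in> diffset A. d > 0} \<le> 8"
proof (rule ccontr)
  let ?k = "card {d \<in> diffset A. d > 0}"
  assume "\<not> ?k \<le> 8"
  have "finite A" "A \<noteq> {}"
    using assms unfolding sum_dominant_def by auto
  have pairs: "card (sum_pairs A) = 21" "card (diff_pairs A) = 15"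
    using card_sum_pairs[OF \<open>finite A\<close>] card_sum_pairs_add_card_diff_pairs[OF \<open>finite A\<close>]
      assms(2) by simp_all
  have sums_le: "card (sumset A) \<le> 21"
    using card_image_le[OF finite_sum_pairs[OF \<open>finite A\<close>]] pairs
    unfolding sumset_eq_image_sum_pairs by metis
  have "2 * ?k + 1 < card (sumset A)"
    using assms(1) card_diffset[OF \<open>finite A\<close> \<open>A \<noteq> {}\<close>] unfolding sum_dominant_def by simp
  then have "card (sum_pairs A) \<le> Suc (card ((\<lambda>(a, b). a + b) ` sum_pairs A))"
    using \<open>\<not> ?k \<le> 8\<close> pairs unfolding sumset_eq_image_sum_pairs by linarith
  then obtain t where "inj_on (\<lambda>(a, b). a + b) (sum_pairs A - {t})"
    using inj_on_Diff_singleton_if_card_le_Suc_card_image \<open>finite A\<close> finite_sum_pairs by blast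
  from card_diff_pairs_le_if_inj_on_sums[OF \<open>finite A\<close> this] have "10 \<le> ?k"
    using pairs assms(2) by simp
  then show False
    using \<open>2 * ?k + 1 < card (sumset A)\<close> sums_le by linarith
qed

end
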